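(* Let $k\ge2$. There is a first-order formula $\gamma(x,y,z,t)$ in the group language such that for every $b_1\in Ab$ and all $n,l,m\in\mathbb{Z}$: $BS(1,k)\models\gamma(b_1^n,b_1^l,b_1^m,b_1)$ if and only if $n\cdot l=m$. (That is, multiplication of integers is definable on $\langle b_1\rangle$, identified with $\mathbb{Z}$ via $b_1^m\mapsto m$, with parameter $b_1$.)
   Context: $BS(1,k)=\langle a,b\mid b^{-1}ab=a^k\rangle$, identified with $\mathbb{Z}[1/k]\rtimes\mathbb{Z}$ (pairs $(y,m)$, $y\in\mathbb{Z}[1/k]=\{zk^i:z,i\in\mathbb{Z}\}$, product $(y_1,m_1)(y_2,m_2)=(y_1+y_2k^{-m_1},m_1+m_2)$), with $a=(1,0)$, $b=(0,1)$; $a^y=(y,0)$. $Ab=\{a^yb:y\in\mathbb{Z}[1/k]\}$. *)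

theory Defs
  imports Complex_Main "HOL-Algebra.Group"
begin

datatype gterm = GVar nat | GOne | GMul gterm gterm | GInv gterm

datatype gform = GEq gterm gterm | GNeg gform | GConj gform gform | GEx nat gform

fun tval :: "('a, 'b) monoid_scheme \<Rightarrow> (nat \<Rightarrow> 'a) \<Rightarrow> gterm \<Rightarrow> 'a" where
  "tval G e (GVar i) = e i"
| "tval G e GOne = \<one>\<^bsub>G\<^esub>"
| "tval G e (GMul s t) = tval G e s \<otimes>\<^bsub>G\<^esub> tval G e t"
| "tval G e (GInv t) = inv\<^bsub>G\<^esub> (tval G e t)"

fun sat :: "('a, 'b) monoid_scheme \<Rightarrow> (nat \<Rightarrow> 'a) \<Rightarrow> gform \<Rightarrow> bool" where
  "sat G e (GEq s t) = (tval G e s = tval G e t)"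
| "sat G e (GNeg \<phi>) = (\<not> sat G e \<phi>)"
| "sat G e (GConj \<phi> \<psi>) = (sat G e \<phi> \<and> sat G e \<psi>)"
| "sat G e (GEx x \<phi>) = (\<exists>a\<in>carrier G. sat G (e(x := a)) \<phi>)"

fun tfv :: "gterm \<Rightarrow> nat set" where
  "tfv (GVar i) = {i}"
| "tfv GOne = {}"
| "tfv (GMul s t) = tfv s \<union> tfv t"
| "tfv (GInv t) = tfv t"

fun fv :: "gform \<Rightarrow> nat set" where
  "fv (GEq s t) = tfv s \<union> tfv t"
| "fv (GNeg \<phi>) = fv \<phi>"
| "fv (GConj \<phi> \<psi>) = fv \<phi> \<union> fv \<psi>"
| "fv (GEx x \<phi>) = fv \<phi> - {x}"

text \<open>Assignment x:=v0, y:=v1, z:=v2, t:=v3 (variables 0,1,2,3).\<close>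
definition asg4 :: "'a \<Rightarrow> 'a \<Rightarrow> 'a \<Rightarrow> 'a \<Rightarrow> 'a \<Rightarrow> nat \<Rightarrow> 'a" where
  "asg4 d v0 v1 v2 v3 i =
     (if i = 0 then v0 else if i = 1 then v1 else if i = 2 then v2 else if i = 3 then v3 else d)"

section \<open>BS(1,k) as Z[1/k] \<rtimes> Z\<close>

definition Zinvk :: "int \<Rightarrow> rat set" where
  "Zinvk k = {of_int z * (of_int k) powi i | z i. True}"

definition BS :: "int \<Rightarrow> (rat \<times> int) monoid" where
  "BS k = \<lparr> carrier = {p. fst p \<in> Zinvk k},
            mult = (\<lambda>(y1, m1) (y2, m2). (y1 + y2 * (of_int k) powi (- m1), m1 + m2)),
            one = (0, 0) \<rparr>"

definition bs_a_pow :: "rat \<Rightarrow> rat \<times> int" where "bs_a_pow y = (y, 0)"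
definition bs_b :: "rat \<times> int" where "bs_b = (0, 1)"

definition Ab :: "int \<Rightarrow> (rat \<times> int) set" where
  "Ab k = {bs_a_pow y \<otimes>\<^bsub>BS k\<^esub> bs_b | y. y \<in> Zinvk k}"

end

(* Write t = b1 = (y, 1) and c = y k / (k - 1). Then t^n = (c (1 - k^-n), n), and these
   elements are exactly the centralizer of t, so quantifiers over <t> are expressible. The
   commutators [t^m, g], g in BS(1,k), form the subgroup (1 - k^-m) Z[1/k] of the base, and
   (1 - k^-l) divides (1 - k^-m) in Z[1/k] iff k^|l| - 1 divides k^|m| - 1, i.e. iff l divides m.
   So divisibility on <t> is definable, hence so is the lcm. As a is coprime to a + 1 and to
   a - 1, s = a^2 iff s + a = +-lcm(a, a + 1) and s - a = +-lcm(a, a - 1). Finally n l = m iff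
   (n + l)^2 = n^2 + l^2 + 2 m. *)

theory Submission
  imports Defs "HOL-Algebra.Elementary_Groups"
begin

lemma Zinvk_iff:
  assumes "k \<noteq> 0"
  shows "q \<in> Zinvk k \<longleftrightarrow> (\<exists>(n::nat) (a::int). q * of_int k ^ n = of_int a)"
proof
  assume "q \<in> Zinvk k"
  then obtain z i where q: "q = of_int z * of_int k powi i"
    unfolding Zinvk_def by auto
  show "\<exists>(n::nat) (a::int). q * of_int k ^ n = of_int a"
  proof (cases "i \<ge> 0")
    case True
    then have "q = of_int (z * k ^ nat i)"
      using q by (simp add: power_int_def)
    then show ?thesis by (metis mult.right_neutral power_0)
  next
    case False
    then have "q * of_int k ^ nat (- i) = of_int z"
      using q assms by (simp add: power_int_def field_simps)
    then show ?thesis by blast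
  qed
next
  assume "\<exists>(n::nat) (a::int). q * of_int k ^ n = of_int a"
  then obtain n a where "q * of_int k ^ n = of_int a" by blast
  then have "q = of_int a * of_int k powi (- int n)"
    using assms by (simp add: power_int_minus field_simps)
  then show "q \<in> Zinvk k"
    unfolding Zinvk_def by blast
qed

lemma of_int_in_Zinvk [simp]: "of_int a \<in> Zinvk k"
  unfolding Zinvk_def by (rule CollectI, rule exI[of _ a], rule exI[of _ 0]) simp

lemma zero_in_Zinvk [simp]: "0 \<in> Zinvk k"
  using of_int_in_Zinvk[of 0] by simp

lemma one_in_Zinvk [simp]: "1 \<in> Zinvk k"
  using of_int_in_Zinvk[of 1] by simp

lemma powi_in_Zinvk [simp]: "of_int k powi i \<in> Zinvk k"
  unfolding Zinvk_def by (rule CollectI, rule exI[of _ 1], rule exI[of _ i]) simp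

lemma Zinvk_add:
  assumes "k \<noteq> 0" "q1 \<in> Zinvk k" "q2 \<in> Zinvk k"
  shows "q1 + q2 \<in> Zinvk k"
proof -
  obtain n1 a1 n2 a2 where q1: "q1 * of_int k ^ n1 = of_int a1" and q2: "q2 * of_int k ^ n2 = of_int a2"
    using assms Zinvk_iff by meson
  then have "(q1 + q2) * of_int k ^ (n1 + n2) = of_int (a1 * k ^ n2 + a2 * k ^ n1)"
    by (simp add: algebra_simps power_add flip: q1 q2)
  then show ?thesis
    using Zinvk_iff[OF assms(1)] by blast
qed

lemma Zinvk_mult:
  assumes "k \<noteq> 0" "q1 \<in> Zinvk k" "q2 \<in> Zinvk k"
  shows "q1 * q2 \<in> Zinvk k"
proof -
  obtain n1 a1 n2 a2 where q1: "q1 * of_int k ^ n1 = of_int a1" and q2: "q2 * of_int k ^ n2 = of_int a2"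
    using assms Zinvk_iff by meson
  then have "(q1 * q2) * of_int k ^ (n1 + n2) = of_int (a1 * a2)"
    by (simp add: algebra_simps power_add flip: q1 q2)
  then show ?thesis
    using Zinvk_iff[OF assms(1)] by blast
qed

lemma Zinvk_uminus: "k \<noteq> 0 \<Longrightarrow> q \<in> Zinvk k \<Longrightarrow> - q \<in> Zinvk k"
  using Zinvk_mult[of k "-1" q] of_int_in_Zinvk[of "-1" k] by simp

lemma Zinvk_diff: "k \<noteq> 0 \<Longrightarrow> q1 \<in> Zinvk k \<Longrightarrow> q2 \<in> Zinvk k \<Longrightarrow> q1 - q2 \<in> Zinvk k"
  using Zinvk_add[of k q1 "- q2"] Zinvk_uminus by auto

lemma BS_mult: "(a, b) \<otimes>\<^bsub>BS k\<^esub> (c, d) = (a + c * of_int k powi (- b), b + d)"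
  by (simp add: BS_def)

lemma BS_one: "\<one>\<^bsub>BS k\<^esub> = (0, 0)"
  by (simp add: BS_def)

lemma BS_carrier: "p \<in> carrier (BS k) \<longleftrightarrow> fst p \<in> Zinvk k"
  by (simp add: BS_def)

lemma group_BS:
  assumes "k \<noteq> 0"
  shows "group (BS k)"
proof (rule groupI)
  fix x y
  assume "x \<in> carrier (BS k)" "y \<in> carrier (BS k)"
  then show "x \<otimes>\<^bsub>BS k\<^esub> y \<in> carrier (BS k)"
    using assms by (cases x, cases y) (auto simp: BS_mult BS_carrier intro!: Zinvk_add Zinvk_mult)
next
  fix x y z :: "rat \<times> int"
  have "of_int k powi (- snd x - snd y) = of_int k powi (- snd x) * (of_int k powi (- snd y) :: rat)"
    using assms by (simp add: power_int_diff power_int_minus field_simps)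
  then show "x \<otimes>\<^bsub>BS k\<^esub> y \<otimes>\<^bsub>BS k\<^esub> z = x \<otimes>\<^bsub>BS k\<^esub> (y \<otimes>\<^bsub>BS k\<^esub> z)"
    by (cases x, cases y, cases z) (simp add: BS_mult algebra_simps)
next
  fix x
  assume x: "x \<in> carrier (BS k)"
  obtain a b where ab: "x = (a, b)" by force
  have "(- a * of_int k powi b, - b) \<in> carrier (BS k)"
    using x ab assms by (auto simp: BS_carrier intro!: Zinvk_uminus Zinvk_mult)
  moreover have "(- a * of_int k powi b, - b) \<otimes>\<^bsub>BS k\<^esub> x = \<one>\<^bsub>BS k\<^esub>"
    using ab by (simp add: BS_mult BS_one)
  ultimately show "\<exists>y\<in>carrier (BS k). y \<otimes>\<^bsub>BS k\<^esub> x = \<one>\<^bsub>BS k\<^esub>" by blast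
qed (auto simp: BS_one BS_carrier BS_mult)

lemma BS_inv:
  assumes "k \<noteq> 0" "(a, b) \<in> carrier (BS k)"
  shows "inv\<^bsub>BS k\<^esub> (a, b) = (- a * of_int k powi b, - b)"
  using assms by (intro group.inv_equality[OF group_BS])
    (auto simp: BS_mult BS_one BS_carrier intro!: Zinvk_uminus Zinvk_mult)

lemma snd_hom_BS: "snd \<in> hom (BS k) integer_group"
  by (rule homI) (auto simp: BS_def)

lemma Ab_eq: "Ab k = {(y, 1) | y. y \<in> Zinvk k}"
  by (auto simp: Ab_def bs_a_pow_def bs_b_def BS_mult)

lemma power_minus_one_dvd:
  fixes k :: "'a :: comm_ring_1"
  assumes "a dvd b"
  shows "(k ^ a - 1) dvd (k ^ b - 1)"
proof -
  obtain d where "k ^ b - 1 = (k ^ a) ^ d - 1"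
    using assms by (auto simp: power_mult)
  also have "\<dots> = (k ^ a - 1) * (\<Sum>i<d. (k ^ a) ^ i)"
    by (rule power_diff_1_eq)
  finally show ?thesis by simp
qed

lemma power_minus_one_dvd_iff:
  fixes k :: int
  assumes "k \<ge> 2"
  shows "(k ^ a - 1) dvd (k ^ b - 1) \<longleftrightarrow> a dvd b"
proof
  assume dvd: "(k ^ a - 1) dvd (k ^ b - 1)"
  have pow_eq_1: "k ^ n = 1 \<Longrightarrow> n = 0" for n
    using assms one_less_power[of k n] by fastforce
  show "a dvd b"
  proof (cases "a = 0")
    case True
    then show ?thesis using dvd pow_eq_1 by simp
  next
    case False
    define r where "r = b mod a"
    have "k ^ b - 1 = k ^ r * ((k ^ a) ^ (b div a) - 1) + (k ^ r - 1)"
      by (simp add: r_def algebra_simps flip: power_mult power_add)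
    moreover have "(k ^ a - 1) dvd ((k ^ a) ^ (b div a) - 1)"
      using power_minus_one_dvd[of a "a * (b div a)" k] by (simp add: power_mult)
    ultimately have "(k ^ a - 1) dvd (k ^ r - 1)"
      using dvd by (metis dvd_add_right_iff dvd_mult)
    moreover have "0 \<le> k ^ r - 1" "k ^ r - 1 < k ^ a - 1"
      using assms False by (auto simp: r_def intro: power_strict_increasing)
    ultimately have "k ^ r - 1 = 0"
      using zdvd_not_zless[of "k ^ r - 1" "k ^ a - 1"] by linarith
    then show ?thesis
      using pow_eq_1[of r] by (simp add: r_def dvd_eq_mod_eq_0)
  qed
qed (rule power_minus_one_dvd)

lemma abs_eq_lcm_iff:
  fixes a b r :: int
  shows "(\<forall>d. r dvd d \<longleftrightarrow> a dvd d \<and> b dvd d) \<longleftrightarrow> \<bar>r\<bar> = lcm a b"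
proof -
  have "(\<forall>d. r dvd d \<longleftrightarrow> a dvd d \<and> b dvd d) \<longleftrightarrow> (\<forall>d. r dvd d \<longleftrightarrow> lcm a b dvd d)"
    by simp
  also have "\<dots> \<longleftrightarrow> r dvd lcm a b \<and> lcm a b dvd r"
    by (meson dvd_refl dvd_trans)
  also have "\<dots> \<longleftrightarrow> \<bar>r\<bar> = lcm a b"
    by (metis associated_iff_dvd normalize_idem normalize_lcm normalize_int_def)
  finally show ?thesis .
qed

lemma square_iff_abs_eq:
  fixes a s :: int
  shows "\<bar>s + a\<bar> = \<bar>a * (a + 1)\<bar> \<and> \<bar>s - a\<bar> = \<bar>a * (a - 1)\<bar> \<longleftrightarrow> s = a * a"
  by (cases "a = 0") (auto simp: abs_eq_iff algebra_simps)

definition Zinvk_dvd :: "int \<Rightarrow> rat \<Rightarrow> rat \<Rightarrow> bool" where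
  "Zinvk_dvd k \<alpha> \<beta> \<longleftrightarrow> (\<exists>\<rho>\<in>Zinvk k. \<beta> = \<alpha> * \<rho>)"

lemma Zinvk_dvd_of_int_iff:
  assumes "k \<noteq> 0" "a \<noteq> 0 \<Longrightarrow> coprime a k"
  shows "Zinvk_dvd k (of_int a) (of_int b) \<longleftrightarrow> a dvd b"
proof
  assume "a dvd b"
  then obtain c where "b = a * c" ..
  then show "Zinvk_dvd k (of_int a) (of_int b)"
    unfolding Zinvk_dvd_def by (intro bexI[of _ "of_int c"]) simp_all
next
  assume "Zinvk_dvd k (of_int a) (of_int b)"
  then obtain \<rho> where "\<rho> \<in> Zinvk k" and b: "of_int b = of_int a * \<rho>"
    unfolding Zinvk_dvd_def by blast
  then obtain n z where \<rho>: "\<rho> * of_int k ^ n = of_int z"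
    using Zinvk_iff[OF assms(1)] by blast
  have "(of_int (b * k ^ n) :: rat) = of_int (a * z)"
    by (simp add: b flip: \<rho>)
  then have "a dvd b * k ^ n"
    by (metis dvd_triv_left of_int_eq_iff)
  then show "a dvd b"
    using assms by (cases "a = 0") (simp_all add: coprime_dvd_mult_left_iff)
qed

lemma Zinvk_dvd_unit_mult_iff:
  assumes "k \<noteq> 0"
    and "u \<noteq> 0" "u \<in> Zinvk k" "inverse u \<in> Zinvk k"
    and "v \<noteq> 0" "v \<in> Zinvk k" "inverse v \<in> Zinvk k"
  shows "Zinvk_dvd k (u * \<alpha>) (v * \<beta>) \<longleftrightarrow> Zinvk_dvd k \<alpha> \<beta>"
proof
  assume "Zinvk_dvd k (u * \<alpha>) (v * \<beta>)"
  then obtain \<rho> where \<rho>: "\<rho> \<in> Zinvk k" "v * \<beta> = u * \<alpha> * \<rho>"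
    unfolding Zinvk_dvd_def by blast
  have "\<beta> = \<alpha> * (u * \<rho> * inverse v)"
    using \<rho>(2) assms by (simp add: field_simps)
  moreover have "u * \<rho> * inverse v \<in> Zinvk k"
    using \<rho>(1) assms by (simp add: Zinvk_mult)
  ultimately show "Zinvk_dvd k \<alpha> \<beta>"
    unfolding Zinvk_dvd_def by blast
next
  assume "Zinvk_dvd k \<alpha> \<beta>"
  then obtain \<rho> where \<rho>: "\<rho> \<in> Zinvk k" "\<beta> = \<alpha> * \<rho>"
    unfolding Zinvk_dvd_def by blast
  have "v * \<beta> = u * \<alpha> * (v * \<rho> * inverse u)"
    using \<rho>(2) assms by (simp add: field_simps)
  moreover have "v * \<rho> * inverse u \<in> Zinvk k"
    using \<rho>(1) assms by (simp add: Zinvk_mult)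
  ultimately show "Zinvk_dvd k (u * \<alpha>) (v * \<beta>)"
    unfolding Zinvk_dvd_def by blast
qed

lemma one_minus_powi_eq:
  fixes k :: int
  assumes "k \<noteq> 0"
  shows "1 - of_int k powi (- n) =
    (if n \<ge> 0 then of_int k powi (- n) else - 1) * (of_int (k ^ nat \<bar>n\<bar> - 1) :: rat)"
  using assms by (simp add: power_int_def field_simps)

lemma Zinvk_dvd_one_minus_powi_iff:
  fixes k :: int
  assumes "k \<ge> 2"
  shows "Zinvk_dvd k (1 - of_int k powi (- l)) (1 - of_int k powi (- m)) \<longleftrightarrow> l dvd m"
proof -
  have k: "k \<noteq> 0" using assms by simp
  let ?u = "\<lambda>n::int. if n \<ge> 0 then of_int k powi (- n) else (- 1 :: rat)"
  have unit: "?u n \<noteq> 0" "?u n \<in> Zinvk k" "inverse (?u n) \<in> Zinvk k" for n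
    using k of_int_in_Zinvk[of "- 1" k] by (auto simp flip: power_int_minus)
  have "Zinvk_dvd k (1 - of_int k powi (- l)) (1 - of_int k powi (- m))
      \<longleftrightarrow> Zinvk_dvd k (of_int (k ^ nat \<bar>l\<bar> - 1)) (of_int (k ^ nat \<bar>m\<bar> - 1))"
    unfolding one_minus_powi_eq[OF k] by (rule Zinvk_dvd_unit_mult_iff[OF k unit unit])
  also have "\<dots> \<longleftrightarrow> (k ^ nat \<bar>l\<bar> - 1) dvd (k ^ nat \<bar>m\<bar> - 1)"
    using coprime_diff_one_left[of "k ^ nat \<bar>l\<bar>"] by (intro Zinvk_dvd_of_int_iff[OF k]) auto
  also have "\<dots> \<longleftrightarrow> l dvd m"
    using power_minus_one_dvd_iff[OF assms] by (metis nat_abs_dvd_iff dvd_abs_iff abs_dvd_iff int_nat_eq abs_ge_zero of_nat_dvd_iff)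
  finally show ?thesis .
qed

definition commutator :: "('a, 'b) monoid_scheme \<Rightarrow> 'a \<Rightarrow> 'a \<Rightarrow> 'a" where
  "commutator G x w = x \<otimes>\<^bsub>G\<^esub> w \<otimes>\<^bsub>G\<^esub> inv\<^bsub>G\<^esub> x \<otimes>\<^bsub>G\<^esub> inv\<^bsub>G\<^esub> w"

lemma commutator_BS:
  assumes "k \<noteq> 0" "(z, i) \<in> carrier (BS k)" "(r, j) \<in> carrier (BS k)"
  shows "commutator (BS k) (z, i) (r, j) =
    (z * (1 - of_int k powi (- j)) - r * (1 - of_int k powi (- i)), 0)"
proof -
  have "of_int k powi i * of_int k powi (- i - j) = (of_int k powi (- j) :: rat)"
       "of_int k powi j * of_int k powi (- j) = (1 :: rat)"
    using assms(1) by (simp_all flip: power_int_add)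
  then show ?thesis
    using assms by (simp add: commutator_def BS_inv BS_mult algebra_simps)
qed

locale BS_Ab_element =
  fixes k :: int and y :: rat
  assumes k_ge_2: "k \<ge> 2" and y_in_Zinvk: "y \<in> Zinvk k"
begin

abbreviation "G \<equiv> BS k"
abbreviation "K \<equiv> rat_of_int k"

definition t :: "rat \<times> int" where "t = (y, 1)"
definition c :: rat where "c = y * K / (K - 1)"

lemma k_nonzero: "k \<noteq> 0"
  using k_ge_2 by simp

sublocale group G
  by (rule group_BS[OF k_nonzero])

lemma t_in_carrier [simp]: "t \<in> carrier G"
  using y_in_Zinvk by (simp add: t_def BS_carrier)

lemma commutes_with_t_iff:
  "(z, j) \<otimes>\<^bsub>G\<^esub> t = t \<otimes>\<^bsub>G\<^esub> (z, j) \<longleftrightarrow> z = c * (1 - K powi (- j))"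
proof -
  have "K \<noteq> 0" "K - 1 \<noteq> 0"
    using k_ge_2 by simp_all
  then show ?thesis
    by (auto simp: t_def c_def BS_mult power_int_minus field_simps)
qed

lemma snd_t_pow: "snd (t [^]\<^bsub>G\<^esub> (n::int)) = n"
  using hom_int_pow[OF snd_hom_BS t_in_carrier] by (simp add: t_def)

lemma t_pow_commutes: "t [^]\<^bsub>G\<^esub> (n::int) \<otimes>\<^bsub>G\<^esub> t = t \<otimes>\<^bsub>G\<^esub> t [^]\<^bsub>G\<^esub> n"
  using int_pow_mult[of t n 1] int_pow_mult[of t 1 n] by (simp add: add.commute)

lemma t_pow_eq: "t [^]\<^bsub>G\<^esub> (n::int) = (c * (1 - K powi (- n)), n)"
  using t_pow_commutes[of n] commutes_with_t_iff snd_t_pow by (metis prod.collapse)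

lemma t_pow_inject [simp]: "t [^]\<^bsub>G\<^esub> (m::int) = t [^]\<^bsub>G\<^esub> n \<longleftrightarrow> m = n"
  by (metis snd_t_pow)

lemma t_pow_mult [simp]: "t [^]\<^bsub>G\<^esub> (a::int) \<otimes>\<^bsub>G\<^esub> t [^]\<^bsub>G\<^esub> (b::int) = t [^]\<^bsub>G\<^esub> (a + b)"
  by (simp add: int_pow_mult)

lemma t_pow_mult_t [simp]: "t [^]\<^bsub>G\<^esub> (a::int) \<otimes>\<^bsub>G\<^esub> t = t [^]\<^bsub>G\<^esub> (a + 1)"
  using int_pow_mult[OF t_in_carrier, of a 1] by simp

lemma t_pow_mult_inv_t [simp]: "t [^]\<^bsub>G\<^esub> (a::int) \<otimes>\<^bsub>G\<^esub> inv\<^bsub>G\<^esub> t = t [^]\<^bsub>G\<^esub> (a - 1)"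
  using int_pow_mult[OF t_in_carrier, of a "- 1"] int_pow_neg[OF t_in_carrier, of 1] by simp

lemma t_pow_inv [simp]: "inv\<^bsub>G\<^esub> (t [^]\<^bsub>G\<^esub> (a::int)) = t [^]\<^bsub>G\<^esub> (- a)"
  by (simp add: int_pow_neg)

lemma centralizer_t:
  "x \<in> carrier G \<and> x \<otimes>\<^bsub>G\<^esub> t = t \<otimes>\<^bsub>G\<^esub> x \<longleftrightarrow> (\<exists>n::int. x = t [^]\<^bsub>G\<^esub> n)"
proof
  assume "x \<in> carrier G \<and> x \<otimes>\<^bsub>G\<^esub> t = t \<otimes>\<^bsub>G\<^esub> x"
  then show "\<exists>n::int. x = t [^]\<^bsub>G\<^esub> n"
    by (cases x) (auto simp: commutes_with_t_iff t_pow_eq)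
next
  assume "\<exists>n::int. x = t [^]\<^bsub>G\<^esub> n"
  then show "x \<in> carrier G \<and> x \<otimes>\<^bsub>G\<^esub> t = t \<otimes>\<^bsub>G\<^esub> x"
    using t_pow_commutes by auto
qed

lemma commutators_t_pow:
  fixes m :: int
  shows "commutator G (t [^]\<^bsub>G\<^esub> m) ` carrier G = (\<lambda>\<rho>. ((1 - K powi (- m)) * \<rho>, 0)) ` Zinvk k"
proof -
  have formula: "commutator G (t [^]\<^bsub>G\<^esub> m) (r, j) =
      ((1 - K powi (- m)) * (c * (1 - K powi (- j)) - r), 0)" if "(r, j) \<in> carrier G" for r j
  proof -
    have "(c * (1 - K powi (- m)), m) \<in> carrier G"
      using int_pow_closed[OF t_in_carrier, of m] by (simp add: t_pow_eq)
    then show ?thesis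
      using commutator_BS[OF k_nonzero _ that] by (simp add: t_pow_eq algebra_simps)
  qed
  show ?thesis
  proof (intro equalityI subsetI)
    fix x :: "rat \<times> int"
    assume "x \<in> commutator G (t [^]\<^bsub>G\<^esub> m) ` carrier G"
    then obtain r j where rj: "(r, j) \<in> carrier G" "x = commutator G (t [^]\<^bsub>G\<^esub> m) (r, j)"
      by auto
    have "c * (1 - K powi (- j)) \<in> Zinvk k"
      using int_pow_closed[OF t_in_carrier, of j] by (simp add: t_pow_eq BS_carrier)
    then have "c * (1 - K powi (- j)) - r \<in> Zinvk k"
      using rj(1) k_nonzero by (simp add: BS_carrier Zinvk_diff)
    then show "x \<in> (\<lambda>\<rho>. ((1 - K powi (- m)) * \<rho>, 0)) ` Zinvk k"
      using formula[OF rj(1)] rj(2) by blast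
  next
    fix x :: "rat \<times> int"
    assume "x \<in> (\<lambda>\<rho>. ((1 - K powi (- m)) * \<rho>, 0)) ` Zinvk k"
    then obtain \<rho> where "\<rho> \<in> Zinvk k" "x = ((1 - K powi (- m)) * \<rho>, 0)"
      by blast
    moreover from this have "(- \<rho>, 0) \<in> carrier G"
      using k_nonzero by (simp add: BS_carrier Zinvk_uminus)
    ultimately show "x \<in> commutator G (t [^]\<^bsub>G\<^esub> m) ` carrier G"
      using formula[of "- \<rho>" 0] by (intro image_eqI[of _ _ "(- \<rho>, 0)"]) simp_all
  qed
qed

lemma commutators_t_pow_subset_iff:
  fixes l m :: int
  shows "commutator G (t [^]\<^bsub>G\<^esub> m) ` carrier G \<subseteq> commutator G (t [^]\<^bsub>G\<^esub> l) ` carrier G \<longleftrightarrow>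
    l dvd m"
proof -
  let ?\<alpha> = "\<lambda>n::int. 1 - K powi (- n)"
  have "(\<lambda>\<rho>. (?\<alpha> m * \<rho>, 0::int)) ` Zinvk k \<subseteq> (\<lambda>\<rho>. (?\<alpha> l * \<rho>, 0)) ` Zinvk k
      \<longleftrightarrow> Zinvk_dvd k (?\<alpha> l) (?\<alpha> m)"
  proof
    assume "(\<lambda>\<rho>. (?\<alpha> m * \<rho>, 0::int)) ` Zinvk k \<subseteq> (\<lambda>\<rho>. (?\<alpha> l * \<rho>, 0)) ` Zinvk k"
    then have "(?\<alpha> m * 1, 0) \<in> (\<lambda>\<rho>. (?\<alpha> l * \<rho>, 0::int)) ` Zinvk k"
      using imageI[OF one_in_Zinvk, of "\<lambda>\<rho>. (?\<alpha> m * \<rho>, 0::int)"] by blast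
    then show "Zinvk_dvd k (?\<alpha> l) (?\<alpha> m)"
      by (auto simp: Zinvk_dvd_def)
  next
    assume "Zinvk_dvd k (?\<alpha> l) (?\<alpha> m)"
    then obtain \<sigma> where "\<sigma> \<in> Zinvk k" "?\<alpha> m = ?\<alpha> l * \<sigma>"
      unfolding Zinvk_dvd_def by blast
    then show "(\<lambda>\<rho>. (?\<alpha> m * \<rho>, 0::int)) ` Zinvk k \<subseteq> (\<lambda>\<rho>. (?\<alpha> l * \<rho>, 0)) ` Zinvk k"
      using k_nonzero by (auto intro!: image_eqI[of _ _ "\<sigma> * _"] Zinvk_mult)
  qed
  then show ?thesis
    by (simp add: commutators_t_pow Zinvk_dvd_one_minus_powi_iff[OF k_ge_2])
qed

end

definition gAll :: "nat \<Rightarrow> gform \<Rightarrow> gform" where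
  "gAll x \<phi> = GNeg (GEx x (GNeg \<phi>))"

definition gImp :: "gform \<Rightarrow> gform \<Rightarrow> gform" where
  "gImp \<phi> \<psi> = GNeg (GConj \<phi> (GNeg \<psi>))"

definition gIff :: "gform \<Rightarrow> gform \<Rightarrow> gform" where
  "gIff \<phi> \<psi> = GConj (gImp \<phi> \<psi>) (gImp \<psi> \<phi>)"

lemma sat_gAll [simp]: "sat G e (gAll x \<phi>) \<longleftrightarrow> (\<forall>a\<in>carrier G. sat G (e(x := a)) \<phi>)"
  by (simp add: gAll_def)

lemma sat_gImp [simp]: "sat G e (gImp \<phi> \<psi>) \<longleftrightarrow> (sat G e \<phi> \<longrightarrow> sat G e \<psi>)"
  by (simp add: gImp_def)

lemma sat_gIff [simp]: "sat G e (gIff \<phi> \<psi>) \<longleftrightarrow> (sat G e \<phi> \<longleftrightarrow> sat G e \<psi>)"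
  by (auto simp: gIff_def)

lemma tval_fun_upd [simp]: "x \<notin> tfv s \<Longrightarrow> tval G (e(x := a)) s = tval G e s"
  by (induction s) auto

definition gComm :: "gterm \<Rightarrow> gterm \<Rightarrow> gterm" where
  "gComm P Q = GMul (GMul (GMul P Q) (GInv P)) (GInv Q)"

lemma tval_gComm [simp]: "tval G e (gComm P Q) = commutator G (tval G e P) (tval G e Q)"
  by (simp add: gComm_def commutator_def)

(* Variables 0-3 are the parameters x, y, z, t of the theorem; the formulas below use
   the variables 10-17 as their bound variables. *)

definition commutes_with_t :: "nat \<Rightarrow> gform" where
  "commutes_with_t x = GEq (GMul (GVar x) (GVar 3)) (GMul (GVar 3) (GVar x))"

definition gEx_cent :: "nat \<Rightarrow> gform \<Rightarrow> gform" where
  "gEx_cent x \<phi> = GEx x (GConj (commutes_with_t x) \<phi>)"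

definition gAll_cent :: "nat \<Rightarrow> gform \<Rightarrow> gform" where
  "gAll_cent x \<phi> = gAll x (gImp (commutes_with_t x) \<phi>)"

definition divides_form :: "gterm \<Rightarrow> gterm \<Rightarrow> gform" where
  "divides_form P Q = gAll 10 (GEx 11 (GEq (gComm Q (GVar 10)) (gComm P (GVar 11))))"

definition lcm_form :: "gterm \<Rightarrow> gterm \<Rightarrow> gterm \<Rightarrow> gform" where
  "lcm_form P Q R = gAll_cent 12 (gIff (divides_form R (GVar 12))
     (GConj (divides_form P (GVar 12)) (divides_form Q (GVar 12))))"

definition square_form :: "gterm \<Rightarrow> gterm \<Rightarrow> gform" where
  "square_form X S = gEx_cent 13 (gEx_cent 14
     (GConj (lcm_form X (GMul X (GVar 3)) (GVar 13))
     (GConj (lcm_form X (GMul X (GInv (GVar 3))) (GVar 14))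
     (GConj (GEq (GMul S X) (GVar 13)) (GEq (GMul S (GInv X)) (GVar 14))))))"

definition product_form :: gform where
  "product_form = gEx_cent 15 (gEx_cent 16 (gEx_cent 17
     (GConj (square_form (GMul (GVar 0) (GVar 1)) (GVar 15))
     (GConj (square_form (GVar 0) (GVar 16))
     (GConj (square_form (GVar 1) (GVar 17))
       (GEq (GVar 15) (GMul (GMul (GMul (GVar 16) (GVar 17)) (GVar 2)) (GVar 2))))))))"

lemma fv_product_form: "fv product_form \<subseteq> {0, 1, 2, 3}"
  by (auto simp: product_form_def square_form_def lcm_form_def divides_form_def gEx_cent_def
      gAll_cent_def commutes_with_t_def gComm_def gAll_def gIff_def gImp_def)

context BS_Ab_element
begin

lemma sat_gEx_cent:
  assumes "e 3 = t" "x \<noteq> 3"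
  shows "sat G e (gEx_cent x \<phi>) \<longleftrightarrow> (\<exists>n::int. sat G (e(x := t [^]\<^bsub>G\<^esub> n)) \<phi>)"
proof -
  have "sat G e (gEx_cent x \<phi>) \<longleftrightarrow>
      (\<exists>a. (a \<in> carrier G \<and> a \<otimes>\<^bsub>G\<^esub> t = t \<otimes>\<^bsub>G\<^esub> a) \<and> sat G (e(x := a)) \<phi>)"
    using assms by (auto simp: gEx_cent_def commutes_with_t_def)
  then show ?thesis
    by (simp only: centralizer_t) blast
qed

lemma sat_gAll_cent:
  assumes "e 3 = t" "x \<noteq> 3"
  shows "sat G e (gAll_cent x \<phi>) \<longleftrightarrow> (\<forall>n::int. sat G (e(x := t [^]\<^bsub>G\<^esub> n)) \<phi>)"
proof -
  have "sat G e (gAll_cent x \<phi>) \<longleftrightarrow>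
      (\<forall>a. (a \<in> carrier G \<and> a \<otimes>\<^bsub>G\<^esub> t = t \<otimes>\<^bsub>G\<^esub> a) \<longrightarrow> sat G (e(x := a)) \<phi>)"
    using assms by (auto simp: gAll_cent_def commutes_with_t_def)
  then show ?thesis
    by (simp only: centralizer_t) blast
qed

lemma sat_divides_form:
  fixes a b :: int
  assumes "tfv P \<inter> {10, 11} = {}" "tfv Q \<inter> {10, 11} = {}"
    and "tval G e P = t [^]\<^bsub>G\<^esub> a" "tval G e Q = t [^]\<^bsub>G\<^esub> b"
  shows "sat G e (divides_form P Q) \<longleftrightarrow> a dvd b"
proof -
  have "10 \<notin> tfv P" "11 \<notin> tfv P" "10 \<notin> tfv Q" "11 \<notin> tfv Q"
    using assms(1,2) by auto
  then have "sat G e (divides_form P Q) \<longleftrightarrow>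
      commutator G (t [^]\<^bsub>G\<^esub> b) ` carrier G \<subseteq> commutator G (t [^]\<^bsub>G\<^esub> a) ` carrier G"
    using assms(3,4) by (auto simp: divides_form_def)
  then show ?thesis
    by (simp add: commutators_t_pow_subset_iff)
qed

lemma sat_lcm_form:
  fixes a b r :: int
  assumes "tfv P \<inter> {10, 11, 12} = {}" "tfv Q \<inter> {10, 11, 12} = {}" "tfv R \<inter> {10, 11, 12} = {}"
    and "e 3 = t"
    and "tval G e P = t [^]\<^bsub>G\<^esub> a" "tval G e Q = t [^]\<^bsub>G\<^esub> b" "tval G e R = t [^]\<^bsub>G\<^esub> r"
  shows "sat G e (lcm_form P Q R) \<longleftrightarrow> \<bar>r\<bar> = lcm a b"
proof -
  have divides: "sat G (e(12 := t [^]\<^bsub>G\<^esub> n)) (divides_form X (GVar 12)) \<longleftrightarrow> x dvd n"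
    if "tfv X \<inter> {10, 11, 12} = {}" "tval G e X = t [^]\<^bsub>G\<^esub> x" for X and x n :: int
  proof (rule sat_divides_form)
    show "tval G (e(12 := t [^]\<^bsub>G\<^esub> n)) X = t [^]\<^bsub>G\<^esub> x"
      using that by (subst tval_fun_upd) auto
  qed (use that in auto)
  have "sat G e (lcm_form P Q R) \<longleftrightarrow> (\<forall>n. r dvd n \<longleftrightarrow> a dvd n \<and> b dvd n)"
    using assms by (simp add: lcm_form_def sat_gAll_cent divides)
  then show ?thesis
    by (simp add: abs_eq_lcm_iff)
qed

lemma sat_square_form:
  fixes a s :: int
  assumes "tfv X \<inter> {10..14} = {}" "tfv S \<inter> {10..14} = {}"
    and "e 3 = t" "tval G e X = t [^]\<^bsub>G\<^esub> a" "tval G e S = t [^]\<^bsub>G\<^esub> s"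
  shows "sat G e (square_form X S) \<longleftrightarrow> s = a * a"
proof -
  let ?e = "\<lambda>m\<^sub>1 m\<^sub>2. e(13 := t [^]\<^bsub>G\<^esub> m\<^sub>1, 14 := t [^]\<^bsub>G\<^esub> m\<^sub>2)"
  have fresh: "13 \<notin> tfv X" "14 \<notin> tfv X" "13 \<notin> tfv S" "14 \<notin> tfv S"
    and X_fresh: "tfv X \<inter> {10, 11, 12} = {}"
    using assms(1,2) by auto
  have lcm_plus: "sat G (?e m\<^sub>1 m\<^sub>2) (lcm_form X (GMul X (GVar 3)) (GVar 13)) \<longleftrightarrow>
      \<bar>m\<^sub>1\<bar> = lcm a (a + 1)" for m\<^sub>1 m\<^sub>2
    by (rule sat_lcm_form) (use X_fresh fresh assms(3,4) in auto)
  have lcm_minus: "sat G (?e m\<^sub>1 m\<^sub>2) (lcm_form X (GMul X (GInv (GVar 3))) (GVar 14)) \<longleftrightarrow>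
      \<bar>m\<^sub>2\<bar> = lcm a (a - 1)" for m\<^sub>1 m\<^sub>2
    by (rule sat_lcm_form) (use X_fresh fresh assms(3,4) in auto)
  have "sat G e (square_form X S) \<longleftrightarrow>
      (\<exists>m\<^sub>1 m\<^sub>2. \<bar>m\<^sub>1\<bar> = lcm a (a + 1) \<and> \<bar>m\<^sub>2\<bar> = lcm a (a - 1) \<and> s + a = m\<^sub>1 \<and> s - a = m\<^sub>2)"
    using assms(3-5) fresh by (simp add: square_form_def sat_gEx_cent lcm_plus lcm_minus)
  also have "\<dots> \<longleftrightarrow> \<bar>s + a\<bar> = \<bar>a * (a + 1)\<bar> \<and> \<bar>s - a\<bar> = \<bar>a * (a - 1)\<bar>"
    by (simp add: lcm_coprime)
  also have "\<dots> \<longleftrightarrow> s = a * a"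
    by (rule square_iff_abs_eq)
  finally show ?thesis .
qed

lemma sat_product_form:
  fixes n l m :: int
  shows "sat G (asg4 \<one>\<^bsub>G\<^esub> (t [^]\<^bsub>G\<^esub> n) (t [^]\<^bsub>G\<^esub> l) (t [^]\<^bsub>G\<^esub> m) t) product_form
    \<longleftrightarrow> n * l = m"
proof -
  define e where "e = asg4 \<one>\<^bsub>G\<^esub> (t [^]\<^bsub>G\<^esub> n) (t [^]\<^bsub>G\<^esub> l) (t [^]\<^bsub>G\<^esub> m) t"
  have e: "e 0 = t [^]\<^bsub>G\<^esub> n" "e (Suc 0) = t [^]\<^bsub>G\<^esub> l" "e 2 = t [^]\<^bsub>G\<^esub> m" "e 3 = t"
    by (simp_all add: e_def asg4_def)
  let ?e = "\<lambda>s\<^sub>1 s\<^sub>2 s\<^sub>3. e(15 := t [^]\<^bsub>G\<^esub> s\<^sub>1, 16 := t [^]\<^bsub>G\<^esub> s\<^sub>2, 17 := t [^]\<^bsub>G\<^esub> s\<^sub>3)"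
  have "sat G (?e s\<^sub>1 s\<^sub>2 s\<^sub>3) (square_form (GMul (GVar 0) (GVar 1)) (GVar 15)) \<longleftrightarrow>
      s\<^sub>1 = (n + l) * (n + l)"
    and "sat G (?e s\<^sub>1 s\<^sub>2 s\<^sub>3) (square_form (GVar 0) (GVar 16)) \<longleftrightarrow> s\<^sub>2 = n * n"
    and "sat G (?e s\<^sub>1 s\<^sub>2 s\<^sub>3) (square_form (GVar 1) (GVar 17)) \<longleftrightarrow> s\<^sub>3 = l * l"
    for s\<^sub>1 s\<^sub>2 s\<^sub>3
    by (rule sat_square_form; simp add: e)+
  then have "sat G e product_form \<longleftrightarrow>
      (\<exists>s\<^sub>1 s\<^sub>2 s\<^sub>3. s\<^sub>1 = (n + l) * (n + l) \<and> s\<^sub>2 = n * n \<and> s\<^sub>3 = l * l \<and> s\<^sub>1 = s\<^sub>2 + s\<^sub>3 + m + m)"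
    by (simp add: product_form_def sat_gEx_cent e)
  also have "\<dots> \<longleftrightarrow> n * l = m"
    by (auto simp: algebra_simps)
  finally show ?thesis
    unfolding e_def .
qed

end

theorem lemma4p6:
  fixes k :: int
  assumes "k \<ge> 2"
  shows "\<exists>\<gamma>::gform. fv \<gamma> \<subseteq> {0, 1, 2, 3} \<and>
    (\<forall>b1 \<in> Ab k. \<forall>n l m :: int.
       sat (BS k) (asg4 \<one>\<^bsub>BS k\<^esub> (b1 [^]\<^bsub>BS k\<^esub> n) (b1 [^]\<^bsub>BS k\<^esub> l)
                      (b1 [^]\<^bsub>BS k\<^esub> m) b1) \<gamma>
       \<longleftrightarrow> n * l = m)"
proof (intro exI conjI ballI allI)
  show "fv product_form \<subseteq> {0, 1, 2, 3}"
    by (rule fv_product_form)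
next
  fix b1 and n l m :: int
  assume "b1 \<in> Ab k"
  then obtain y where "y \<in> Zinvk k" and b1: "b1 = (y, 1)"
    by (auto simp: Ab_eq)
  then interpret BS_Ab_element k y
    using assms by unfold_locales
  show "sat (BS k) (asg4 \<one>\<^bsub>BS k\<^esub> (b1 [^]\<^bsub>BS k\<^esub> n) (b1 [^]\<^bsub>BS k\<^esub> l)
      (b1 [^]\<^bsub>BS k\<^esub> m) b1) product_form \<longleftrightarrow> n * l = m"
    using sat_product_form by (simp add: b1 flip: t_def)
qed

end
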